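(* For every $n\ge1$, the set $\Theta(\mathcal S^C_{2n}(321))$ equals the set of signed permutations in $B_n$ that avoid all six signed patterns $$321,\quad \bar3\,2\,1,\quad 3\,2\,\bar1,\quad \bar3\,2\,\bar1,\quad 1\,\bar2,\quad \bar1\,\bar2.$$
   Context: $B_n$ is the hyperoctahedral group: bijections $\sigma$ of $\{-n,\dots,-1,1,\dots,n\}$ with $\sigma(-i)=-\sigma(i)$, written as the word $\sigma(1)\cdots\sigma(n)$; $\bar a$ denotes $-a$, and $|\sigma|=|\sigma(1)|\cdots|\sigma(n)|\in\mathcal S_n$. $\mathcal S^C_{2n}(321)$ is the set of $321$-avoiding permutations $\pi\in\mathcal S_{2n}$ that are centrosymmetric, i.e. $\pi(i)+\pi(2n+1-i)=2n+1$ for all $i$. The map $\Theta$ sends a centrosymmetric $\pi\in\mathcal S_{2n}$ to the element of $B_n$ given, for $1\le i\le n$, by $\Theta(\pi)(i)=\pi(n+i)-n$ if $\pi(n+i)>n$ and $\Theta(\pi)(i)=\pi(n+i)-n-1$ otherwise. A signed permutation $\sigma\in B_n$ contains a signed pattern $\tau\in B_k$ if there are indices $1\le i_1<\dots<i_k\le n$ such that $|\sigma(i_1)|\cdots|\sigma(i_k)|$ is order-isomorphic to $|\tau|$ and $\sigma(i_j)$ has the same sign as $\tau(j)$ for each $j$; otherwise $\sigma$ avoids $\tau$. *)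

theory Defs
  imports "HOL-Combinatorics.Permutations"
begin

definition avoids321 :: "(nat \<Rightarrow> nat) \<Rightarrow> nat \<Rightarrow> bool" where
  "avoids321 \<pi> m \<longleftrightarrow>
     \<not> (\<exists>i j l. 1 \<le> i \<and> i < j \<and> j < l \<and> l \<le> m \<and> \<pi> i > \<pi> j \<and> \<pi> j > \<pi> l)"

definition centrosymmetric :: "(nat \<Rightarrow> nat) \<Rightarrow> nat \<Rightarrow> bool" where
  "centrosymmetric \<pi> m \<longleftrightarrow> (\<forall>i\<in>{1..m}. \<pi> i + \<pi> (m + 1 - i) = m + 1)"

definition SC321 :: "nat \<Rightarrow> (nat \<Rightarrow> nat) set" where
  "SC321 n = {\<pi>. \<pi> permutes {1..2*n} \<and> avoids321 \<pi> (2*n) \<and> centrosymmetric \<pi> (2*n)}"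

text \<open>Signed permutations of B_n, represented by their values sigma(1..n) as a function
  nat => int which is 0 outside {1..n}; sigma(-i) = -sigma(i) is implicit.\<close>
definition signed_perms :: "nat \<Rightarrow> (nat \<Rightarrow> int) set" where
  "signed_perms n = {\<sigma>. (\<forall>i. i \<notin> {1..n} \<longrightarrow> \<sigma> i = 0) \<and> (\<forall>i\<in>{1..n}. \<sigma> i \<noteq> 0)
      \<and> bij_betw (\<lambda>i. nat \<bar>\<sigma> i\<bar>) {1..n} {1..n}}"

definition Theta :: "nat \<Rightarrow> (nat \<Rightarrow> nat) \<Rightarrow> (nat \<Rightarrow> int)" where
  "Theta n \<pi> = (\<lambda>i. if i \<in> {1..n} then
       (if \<pi> (n + i) > n then int (\<pi> (n + i)) - int n else int (\<pi> (n + i)) - int n - 1)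
     else 0)"

text \<open>A signed pattern tau in B_k is given as the list [tau(1),...,tau(k)].
  sigma in B_n contains tau if there are positions f 0 < ... < f (k-1) in {1..n} such that
  |sigma(f j)| is order-isomorphic to |tau| and the signs agree.\<close>
definition contains_pattern :: "nat \<Rightarrow> (nat \<Rightarrow> int) \<Rightarrow> int list \<Rightarrow> bool" where
  "contains_pattern n \<sigma> \<tau> \<longleftrightarrow>
     (\<exists>f :: nat \<Rightarrow> nat. strict_mono_on {..<length \<tau>} f \<and> f ` {..<length \<tau>} \<subseteq> {1..n} \<and>
        (\<forall>j<length \<tau>. \<forall>l<length \<tau>. (\<bar>\<sigma> (f j)\<bar> < \<bar>\<sigma> (f l)\<bar> \<longleftrightarrow> \<bar>\<tau> ! j\<bar> < \<bar>\<tau> ! l\<bar>)) \<and>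
        (\<forall>j<length \<tau>. sgn (\<sigma> (f j)) = sgn (\<tau> ! j)))"

definition avoids_pattern :: "nat \<Rightarrow> (nat \<Rightarrow> int) \<Rightarrow> int list \<Rightarrow> bool" where
  "avoids_pattern n \<sigma> \<tau> \<longleftrightarrow> \<not> contains_pattern n \<sigma> \<tau>"

end

theory Submission
  imports Defs
begin

text \<open>Unfold \<sigma> into the word \<sigma>(-n) \<dots> \<sigma>(-1) \<sigma>(1) \<dots> \<sigma>(n) and relabel its letters
  -n < \<dots> < -1 < 1 < \<dots> < n increasingly as 1, \<dots>, 2n: the result is the centrosymmetric
  permutation that \<Theta> maps to \<sigma>, so \<Theta> is a bijection onto B_n, and it avoids 321 iff the
  unfolded word does. By the antisymmetry w(2n+1-p) = -w(p), a 321 in the word can be moved so that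
  its two smaller letters lie in the right half; its largest letter is then \<sigma>(i) or -\<sigma>(i).
  Sorting such occurrences by signs, and noting that once the patterns 1 -2 and -1 -2 are excluded
  every negative letter is smaller in absolute value than all letters before it, gives exactly the
  six patterns.\<close>

definition occurs321 :: "(nat \<Rightarrow> 'a::linorder) \<Rightarrow> nat \<Rightarrow> bool" where
  "occurs321 w m \<longleftrightarrow> (\<exists>i j l. 1 \<le> i \<and> i < j \<and> j < l \<and> l \<le> m \<and> w i > w j \<and> w j > w l)"

lemma avoids321_iff_not_occurs321: "avoids321 \<pi> m \<longleftrightarrow> \<not> occurs321 \<pi> m"
  by (simp add: avoids321_def occurs321_def)

lemma occurs321_order_iso:
  fixes w :: "nat \<Rightarrow> 'a::linorder" and v :: "nat \<Rightarrow> 'b::linorder"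
  assumes "\<And>p q. p \<in> {1..m} \<Longrightarrow> q \<in> {1..m} \<Longrightarrow> w p < w q \<longleftrightarrow> v p < v q"
  shows "occurs321 w m \<longleftrightarrow> occurs321 v m"
  unfolding occurs321_def
  by (intro ex_cong1 conj_cong refl) (auto simp: assms)

text \<open>The word \<sigma>(-n) \<dots> \<sigma>(-1) \<sigma>(1) \<dots> \<sigma>(n), indexed by 1, \<dots>, 2n.\<close>

definition unfold_signed :: "nat \<Rightarrow> (nat \<Rightarrow> int) \<Rightarrow> nat \<Rightarrow> int" where
  "unfold_signed n \<sigma> p = (if p \<le> n then - \<sigma> (n + 1 - p) else \<sigma> (p - n))"

lemma unfold_signed_right: "1 \<le> i \<Longrightarrow> unfold_signed n \<sigma> (n + i) = \<sigma> i"
  by (simp add: unfold_signed_def)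

lemma unfold_signed_left:
  assumes "i \<in> {1..n}"
  shows "unfold_signed n \<sigma> (n + 1 - i) = - \<sigma> i"
proof -
  have "n + 1 - i \<le> n" "n + 1 - (n + 1 - i) = i" using assms by auto
  then show ?thesis by (simp add: unfold_signed_def)
qed

lemma unfold_signed_mirror:
  "p \<in> {1..2*n} \<Longrightarrow> unfold_signed n \<sigma> (2*n + 1 - p) = - unfold_signed n \<sigma> p"
  by (auto simp: unfold_signed_def Suc_diff_le)

lemma abs_unfold_signed:
  assumes "p \<in> {1..2*n}"
  obtains i where "i \<in> {1..n}" "\<bar>unfold_signed n \<sigma> p\<bar> = \<bar>\<sigma> i\<bar>"
proof (cases "p \<le> n")
  case True
  show ?thesis by (rule that[of "n + 1 - p"]) (use True assms in \<open>auto simp: unfold_signed_def\<close>)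
next
  case False
  show ?thesis by (rule that[of "p - n"]) (use False assms in \<open>auto simp: unfold_signed_def\<close>)
qed

lemma inj_on_unfold_signed_iff:
  assumes nz: "\<forall>i\<in>{1..n}. \<sigma> i \<noteq> 0"
  shows "inj_on (unfold_signed n \<sigma>) {1..2*n} \<longleftrightarrow> inj_on (\<lambda>i. \<bar>\<sigma> i\<bar>) {1..n}"
proof
  assume inj: "inj_on (unfold_signed n \<sigma>) {1..2*n}"
  show "inj_on (\<lambda>i. \<bar>\<sigma> i\<bar>) {1..n}"
  proof (rule inj_onI)
    fix i j assume i: "i \<in> {1..n}" and j: "j \<in> {1..n}" and "\<bar>\<sigma> i\<bar> = \<bar>\<sigma> j\<bar>"
    then consider "unfold_signed n \<sigma> (n + i) = unfold_signed n \<sigma> (n + j)"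
      | "unfold_signed n \<sigma> (n + i) = unfold_signed n \<sigma> (n + 1 - j)"
      using unfold_signed_right[of i n \<sigma>] unfold_signed_right[of j n \<sigma>] unfold_signed_left[of j n \<sigma>]
      by (auto simp: abs_eq_iff)
    then show "i = j"
    proof cases
      case 1
      then show ?thesis using inj_onD[OF inj, of "n + i" "n + j"] i j by auto
    next
      case 2
      then have "n + i = n + 1 - j" using i j by (intro inj_onD[OF inj]) auto
      then show ?thesis using i j by auto
    qed
  qed
next
  assume inj: "inj_on (\<lambda>i. \<bar>\<sigma> i\<bar>) {1..n}"
  show "inj_on (unfold_signed n \<sigma>) {1..2*n}"
  proof (rule inj_onI)
    fix p q assume p: "p \<in> {1..2*n}" and q: "q \<in> {1..2*n}"
      and eq: "unfold_signed n \<sigma> p = unfold_signed n \<sigma> q"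
    define k where "k p = (if p \<le> n then n + 1 - p else p - n)" for p
    have k: "k p \<in> {1..n}" "k q \<in> {1..n}" using p q by (auto simp: k_def)
    have "\<bar>\<sigma> (k p)\<bar> = \<bar>\<sigma> (k q)\<bar>" using eq by (auto simp: k_def unfold_signed_def)
    then have "k p = k q" using inj_onD[OF inj _ k] by blast
    then show "p = q" using eq p q nz k by (auto simp: k_def unfold_signed_def split: if_splits)
  qed
qed

text \<open>An occurrence at the positions n+1-i < n+j < n+l of the unfolded word.\<close>

definition occurs321_across :: "nat \<Rightarrow> (nat \<Rightarrow> int) \<Rightarrow> bool" where
  "occurs321_across n \<sigma> \<longleftrightarrow>
     (\<exists>i j l. i \<in> {1..n} \<and> 1 \<le> j \<and> j < l \<and> l \<le> n \<and> - \<sigma> i > \<sigma> j \<and> \<sigma> j > \<sigma> l)"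

lemma occurs321_unfold_signed_iff:
  "occurs321 (unfold_signed n \<sigma>) (2*n) \<longleftrightarrow> occurs321 \<sigma> n \<or> occurs321_across n \<sigma>"
proof
  assume "occurs321 (unfold_signed n \<sigma>) (2*n)"
  then obtain p q r where pqr: "1 \<le> p" "p < q" "q < r" "r \<le> 2*n"
    and dec: "unfold_signed n \<sigma> p > unfold_signed n \<sigma> q" "unfold_signed n \<sigma> q > unfold_signed n \<sigma> r"
    unfolding occurs321_def by blast
  consider "r \<le> n" | "q \<le> n" "n < r" | "p \<le> n" "n < q" | "n < p" by linarith
  then show "occurs321 \<sigma> n \<or> occurs321_across n \<sigma>"
  proof cases
    case 1
    with pqr dec have "occurs321 \<sigma> n" unfolding occurs321_def
      by (intro exI[of _ "n + 1 - r"] exI[of _ "n + 1 - q"] exI[of _ "n + 1 - p"])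
         (auto simp: unfold_signed_def)
    then show ?thesis ..
  next
    case 2
    with pqr dec have "occurs321_across n \<sigma>" unfolding occurs321_across_def
      by (intro exI[of _ "r - n"] exI[of _ "n + 1 - q"] exI[of _ "n + 1 - p"])
         (auto simp: unfold_signed_def)
    then show ?thesis ..
  next
    case 3
    with pqr dec have "occurs321_across n \<sigma>" unfolding occurs321_across_def
      by (intro exI[of _ "n + 1 - p"] exI[of _ "q - n"] exI[of _ "r - n"])
         (auto simp: unfold_signed_def)
    then show ?thesis ..
  next
    case 4
    with pqr dec have "occurs321 \<sigma> n" unfolding occurs321_def
      by (intro exI[of _ "p - n"] exI[of _ "q - n"] exI[of _ "r - n"])
         (auto simp: unfold_signed_def)
    then show ?thesis ..
  qed
next
  assume "occurs321 \<sigma> n \<or> occurs321_across n \<sigma>"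
  then show "occurs321 (unfold_signed n \<sigma>) (2*n)"
  proof
    assume "occurs321 \<sigma> n"
    then obtain i j l where "1 \<le> i" "i < j" "j < l" "l \<le> n" "\<sigma> i > \<sigma> j" "\<sigma> j > \<sigma> l"
      unfolding occurs321_def by blast
    then show ?thesis unfolding occurs321_def
      by (intro exI[of _ "n + i"] exI[of _ "n + j"] exI[of _ "n + l"])
         (auto simp: unfold_signed_def)
  next
    assume "occurs321_across n \<sigma>"
    then obtain i j l where "i \<in> {1..n}" "1 \<le> j" "j < l" "l \<le> n" "- \<sigma> i > \<sigma> j" "\<sigma> j > \<sigma> l"
      unfolding occurs321_across_def by blast
    then show ?thesis unfolding occurs321_def
      by (intro exI[of _ "n + 1 - i"] exI[of _ "n + j"] exI[of _ "n + l"])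
         (auto simp: unfold_signed_def)
  qed
qed

lemma signed_perms_iff:
  "\<sigma> \<in> signed_perms n \<longleftrightarrow>
     (\<forall>i. i \<notin> {1..n} \<longrightarrow> \<sigma> i = 0) \<and> (\<forall>i\<in>{1..n}. \<sigma> i \<noteq> 0 \<and> \<bar>\<sigma> i\<bar> \<le> int n) \<and>
     inj_on (\<lambda>i. \<bar>\<sigma> i\<bar>) {1..n}"
proof -
  have inj_iff: "inj_on (\<lambda>i. nat \<bar>\<sigma> i\<bar>) A \<longleftrightarrow> inj_on (\<lambda>i. \<bar>\<sigma> i\<bar>) A" for A
    by (auto simp: inj_on_def)
  have "bij_betw (\<lambda>i. nat \<bar>\<sigma> i\<bar>) {1..n} {1..n} \<longleftrightarrow>
      inj_on (\<lambda>i. nat \<bar>\<sigma> i\<bar>) {1..n} \<and> (\<lambda>i. nat \<bar>\<sigma> i\<bar>) ` {1..n} \<subseteq> {1..n}"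
    using endo_inj_surj[of "{1..n}" "\<lambda>i. nat \<bar>\<sigma> i\<bar>"] by (auto simp: bij_betw_def)
  then show ?thesis unfolding signed_perms_def inj_iff by fastforce
qed

text \<open>The increasing bijection from -n, \<dots>, -1, 1, \<dots>, n onto 1, \<dots>, 2n; \<Theta> reads off its inverse.\<close>

definition lift_signed :: "nat \<Rightarrow> int \<Rightarrow> int" where
  "lift_signed n x = x + int n + (if x < 0 then 1 else 0)"

lemma lift_signed_less_iff:
  "x \<noteq> 0 \<Longrightarrow> y \<noteq> 0 \<Longrightarrow> lift_signed n x < lift_signed n y \<longleftrightarrow> x < y"
  by (auto simp: lift_signed_def)

lemma lift_signed_eq_iff:
  "x \<noteq> 0 \<Longrightarrow> y \<noteq> 0 \<Longrightarrow> lift_signed n x = lift_signed n y \<longleftrightarrow> x = y"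
  by (auto simp: lift_signed_def)

lemma lift_signed_uminus: "x \<noteq> 0 \<Longrightarrow> lift_signed n (- x) = 2 * int n + 1 - lift_signed n x"
  by (auto simp: lift_signed_def)

lemma lift_signed_bounds: "x \<noteq> 0 \<Longrightarrow> \<bar>x\<bar> \<le> int n \<Longrightarrow> lift_signed n x \<in> {1..2 * int n}"
  by (auto simp: lift_signed_def)

lemma lift_signed_Theta:
  assumes "i \<in> {1..n}" "\<pi> (n + i) \<in> {1..2*n}"
  shows "Theta n \<pi> i \<noteq> 0" "\<bar>Theta n \<pi> i\<bar> \<le> int n" "lift_signed n (Theta n \<pi> i) = int (\<pi> (n + i))"
  using assms by (auto simp: Theta_def lift_signed_def)

definition encodes :: "nat \<Rightarrow> (nat \<Rightarrow> nat) \<Rightarrow> (nat \<Rightarrow> int) \<Rightarrow> bool" where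
  "encodes n \<pi> \<sigma> \<longleftrightarrow> (\<forall>p\<in>{1..2*n}. int (\<pi> p) = lift_signed n (unfold_signed n \<sigma> p))"

lemma unfold_signed_nonzero:
  "\<forall>i\<in>{1..n}. \<sigma> i \<noteq> 0 \<Longrightarrow> p \<in> {1..2*n} \<Longrightarrow> unfold_signed n \<sigma> p \<noteq> 0"
  by (metis abs_0_eq abs_unfold_signed)

lemma avoids321_iff_encodes:
  assumes enc: "encodes n \<pi> \<sigma>" and nz: "\<forall>i\<in>{1..n}. \<sigma> i \<noteq> 0"
  shows "avoids321 \<pi> (2*n) \<longleftrightarrow> \<not> occurs321 (unfold_signed n \<sigma>) (2*n)"
proof -
  have "\<pi> p < \<pi> q \<longleftrightarrow> unfold_signed n \<sigma> p < unfold_signed n \<sigma> q"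
    if "p \<in> {1..2*n}" "q \<in> {1..2*n}" for p q
    using enc that
      lift_signed_less_iff[OF unfold_signed_nonzero[OF nz] unfold_signed_nonzero[OF nz]]
    unfolding encodes_def by (metis of_nat_less_iff)
  then show ?thesis
    unfolding avoids321_iff_not_occurs321 by (metis occurs321_order_iso)
qed

lemma centrosymmetric_if_encodes:
  assumes enc: "encodes n \<pi> \<sigma>" and nz: "\<forall>i\<in>{1..n}. \<sigma> i \<noteq> 0"
  shows "centrosymmetric \<pi> (2*n)"
  unfolding centrosymmetric_def
proof
  fix p assume p: "p \<in> {1..2*n}"
  then have "2*n + 1 - p \<in> {1..2*n}" by auto
  then have "int (\<pi> (2*n + 1 - p)) = lift_signed n (unfold_signed n \<sigma> (2*n + 1 - p))"
    using enc unfolding encodes_def by blast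
  also have "\<dots> = 2 * int n + 1 - lift_signed n (unfold_signed n \<sigma> p)"
    using unfold_signed_mirror[OF p] lift_signed_uminus[OF unfold_signed_nonzero[OF nz p]] by simp
  also have "\<dots> = 2 * int n + 1 - int (\<pi> p)"
    using enc p unfolding encodes_def by simp
  finally show "\<pi> p + \<pi> (2*n + 1 - p) = 2*n + 1" by linarith
qed

lemma Theta_eqI:
  assumes enc: "encodes n \<pi> \<sigma>"
    and zero: "\<forall>i. i \<notin> {1..n} \<longrightarrow> \<sigma> i = 0" and nz: "\<forall>i\<in>{1..n}. \<sigma> i \<noteq> 0"
  shows "Theta n \<pi> = \<sigma>"
proof
  fix i
  show "Theta n \<pi> i = \<sigma> i"
  proof (cases "i \<in> {1..n}")
    case True
    then have "int (\<pi> (n + i)) = lift_signed n (\<sigma> i)"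
      using enc unfolding encodes_def
      by (auto simp: unfold_signed_right dest: bspec[of _ _ "n + i"])
    moreover have "\<sigma> i \<noteq> 0" using True nz by blast
    ultimately show ?thesis using True by (auto simp: Theta_def lift_signed_def)
  next
    case False
    then show ?thesis using zero by (simp add: Theta_def)
  qed
qed

lemma inj_on_iff_encodes:
  assumes enc: "encodes n \<pi> \<sigma>" and nz: "\<forall>i\<in>{1..n}. \<sigma> i \<noteq> 0"
  shows "inj_on \<pi> {1..2*n} \<longleftrightarrow> inj_on (unfold_signed n \<sigma>) {1..2*n}"
proof -
  have "\<pi> p = \<pi> q \<longleftrightarrow> unfold_signed n \<sigma> p = unfold_signed n \<sigma> q"
    if "p \<in> {1..2*n}" "q \<in> {1..2*n}" for p q
    using enc that
      lift_signed_eq_iff[OF unfold_signed_nonzero[OF nz] unfold_signed_nonzero[OF nz]]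
    unfolding encodes_def by (metis of_nat_eq_iff)
  then show ?thesis unfolding inj_on_def by blast
qed

lemma encodes_Theta:
  assumes perm: "\<pi> permutes {1..2*n}" and cs: "centrosymmetric \<pi> (2*n)"
  shows "encodes n \<pi> (Theta n \<pi>)"
  unfolding encodes_def
proof
  fix p assume p: "p \<in> {1..2*n}"
  have img: "\<pi> (n + i) \<in> {1..2*n}" if "i \<in> {1..n}" for i
    using permutes_in_image[OF perm, of "n + i"] that by auto
  show "int (\<pi> p) = lift_signed n (unfold_signed n (Theta n \<pi>) p)"
  proof (cases "p \<le> n")
    case True
    define i where "i = n + 1 - p"
    have i: "i \<in> {1..n}" and p_eq: "p = n + 1 - i" and mirror: "2*n + 1 - p = n + i"
      using p True by (auto simp: i_def)
    have "unfold_signed n (Theta n \<pi>) p = - Theta n \<pi> i"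
      using unfold_signed_left[OF i] by (simp add: p_eq)
    then have "lift_signed n (unfold_signed n (Theta n \<pi>) p) = 2 * int n + 1 - int (\<pi> (n + i))"
      using lift_signed_uminus lift_signed_Theta[of i n \<pi>] i img[OF i] by simp
    also have "\<dots> = int (\<pi> p)"
    proof -
      have "\<pi> p + \<pi> (2*n + 1 - p) = 2*n + 1" using cs p unfolding centrosymmetric_def by blast
      then show ?thesis unfolding mirror by linarith
    qed
    finally show ?thesis by simp
  next
    case False
    then have i: "p - n \<in> {1..n}" and p_eq: "p = n + (p - n)" using p by auto
    show ?thesis
      using lift_signed_Theta[of "p - n" n \<pi>] i img[OF i]
      by (subst (1 2) p_eq) (simp add: unfold_signed_right)
  qed
qed

lemma Theta_in_signed_perms:
  assumes perm: "\<pi> permutes {1..2*n}" and cs: "centrosymmetric \<pi> (2*n)"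
  shows "Theta n \<pi> \<in> signed_perms n"
proof -
  have img: "\<pi> (n + i) \<in> {1..2*n}" if "i \<in> {1..n}" for i
    using permutes_in_image[OF perm, of "n + i"] that by auto
  have nz: "\<forall>i\<in>{1..n}. Theta n \<pi> i \<noteq> 0" and bound: "\<forall>i\<in>{1..n}. \<bar>Theta n \<pi> i\<bar> \<le> int n"
    using lift_signed_Theta img by blast+
  have "inj_on (unfold_signed n (Theta n \<pi>)) {1..2*n}"
    using inj_on_iff_encodes[OF encodes_Theta[OF perm cs] nz] permutes_inj_on[OF perm] by blast
  then show ?thesis
    unfolding signed_perms_iff inj_on_unfold_signed_iff[OF nz, symmetric] using nz bound
    by (simp add: Theta_def)
qed

definition Theta_inv :: "nat \<Rightarrow> (nat \<Rightarrow> int) \<Rightarrow> nat \<Rightarrow> nat" where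
  "Theta_inv n \<sigma> p = (if p \<in> {1..2*n} then nat (lift_signed n (unfold_signed n \<sigma> p)) else p)"

lemma
  assumes "\<sigma> \<in> signed_perms n"
  shows encodes_Theta_inv: "encodes n (Theta_inv n \<sigma>) \<sigma>"
    and Theta_inv_permutes: "Theta_inv n \<sigma> permutes {1..2*n}"
proof -
  have nz: "\<forall>i\<in>{1..n}. \<sigma> i \<noteq> 0" and bound: "\<forall>i\<in>{1..n}. \<bar>\<sigma> i\<bar> \<le> int n"
    and inj: "inj_on (\<lambda>i. \<bar>\<sigma> i\<bar>) {1..n}"
    using assms unfolding signed_perms_iff by blast+
  have lift: "lift_signed n (unfold_signed n \<sigma> p) \<in> {1..2 * int n}" if "p \<in> {1..2*n}" for p
    using that unfold_signed_nonzero[OF nz] bound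
    by (metis abs_unfold_signed lift_signed_bounds)
  show enc: "encodes n (Theta_inv n \<sigma>) \<sigma>"
    unfolding encodes_def
  proof
    fix p assume p: "p \<in> {1..2*n}"
    then have "0 \<le> lift_signed n (unfold_signed n \<sigma> p)" using lift by fastforce
    then show "int (Theta_inv n \<sigma> p) = lift_signed n (unfold_signed n \<sigma> p)"
      using p by (simp add: Theta_inv_def)
  qed
  have "inj_on (Theta_inv n \<sigma>) {1..2*n}"
    using inj_on_iff_encodes[OF enc nz] inj_on_unfold_signed_iff[OF nz] inj by blast
  moreover have "Theta_inv n \<sigma> ` {1..2*n} \<subseteq> {1..2*n}"
  proof (rule image_subsetI)
    fix p assume p: "p \<in> {1..2*n}"
    then show "Theta_inv n \<sigma> p \<in> {1..2*n}" using lift[OF p] by (auto simp: Theta_inv_def)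
  qed
  ultimately have "bij_betw (Theta_inv n \<sigma>) {1..2*n} {1..2*n}"
    by (simp add: bij_betw_def endo_inj_surj)
  then show "Theta_inv n \<sigma> permutes {1..2*n}"
    by (rule bij_imp_permutes) (auto simp: Theta_inv_def)
qed

lemma Theta_image_SC321:
  "Theta n ` SC321 n = {\<sigma> \<in> signed_perms n. \<not> occurs321 (unfold_signed n \<sigma>) (2*n)}"
proof (intro equalityI subsetI)
  fix \<sigma> assume "\<sigma> \<in> Theta n ` SC321 n"
  then obtain \<pi> where "\<pi> permutes {1..2*n}" "avoids321 \<pi> (2*n)" "centrosymmetric \<pi> (2*n)"
    and "\<sigma> = Theta n \<pi>"
    unfolding SC321_def by blast
  then have "\<sigma> \<in> signed_perms n" and "encodes n \<pi> \<sigma>"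
    using Theta_in_signed_perms encodes_Theta by blast+
  moreover have "\<forall>i\<in>{1..n}. \<sigma> i \<noteq> 0"
    using \<open>\<sigma> \<in> signed_perms n\<close> unfolding signed_perms_iff by blast
  ultimately show "\<sigma> \<in> {\<sigma> \<in> signed_perms n. \<not> occurs321 (unfold_signed n \<sigma>) (2*n)}"
    using avoids321_iff_encodes \<open>avoids321 \<pi> (2*n)\<close> by blast
next
  fix \<sigma> assume "\<sigma> \<in> {\<sigma> \<in> signed_perms n. \<not> occurs321 (unfold_signed n \<sigma>) (2*n)}"
  then have \<sigma>: "\<sigma> \<in> signed_perms n" and avoids: "\<not> occurs321 (unfold_signed n \<sigma>) (2*n)" by auto
  have zero: "\<forall>i. i \<notin> {1..n} \<longrightarrow> \<sigma> i = 0" and nz: "\<forall>i\<in>{1..n}. \<sigma> i \<noteq> 0"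
    using \<sigma> unfolding signed_perms_iff by blast+
  note enc = encodes_Theta_inv[OF \<sigma>]
  have "Theta_inv n \<sigma> \<in> SC321 n"
    unfolding SC321_def using Theta_inv_permutes[OF \<sigma>] avoids321_iff_encodes[OF enc nz] avoids
      centrosymmetric_if_encodes[OF enc nz] by blast
  moreover have "Theta n (Theta_inv n \<sigma>) = \<sigma>"
    using Theta_eqI[OF enc zero nz] .
  ultimately show "\<sigma> \<in> Theta n ` SC321 n" by (metis image_eqI)
qed

lemma contains_pattern_3:
  "contains_pattern n \<sigma> [a, b, c] \<longleftrightarrow> (\<exists>i j l. 1 \<le> i \<and> i < j \<and> j < l \<and> l \<le> n \<and>
     (\<bar>\<sigma> i\<bar> < \<bar>\<sigma> j\<bar> \<longleftrightarrow> \<bar>a\<bar> < \<bar>b\<bar>) \<and> (\<bar>\<sigma> j\<bar> < \<bar>\<sigma> i\<bar> \<longleftrightarrow> \<bar>b\<bar> < \<bar>a\<bar>) \<and>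
     (\<bar>\<sigma> i\<bar> < \<bar>\<sigma> l\<bar> \<longleftrightarrow> \<bar>a\<bar> < \<bar>c\<bar>) \<and> (\<bar>\<sigma> l\<bar> < \<bar>\<sigma> i\<bar> \<longleftrightarrow> \<bar>c\<bar> < \<bar>a\<bar>) \<and>
     (\<bar>\<sigma> j\<bar> < \<bar>\<sigma> l\<bar> \<longleftrightarrow> \<bar>b\<bar> < \<bar>c\<bar>) \<and> (\<bar>\<sigma> l\<bar> < \<bar>\<sigma> j\<bar> \<longleftrightarrow> \<bar>c\<bar> < \<bar>b\<bar>) \<and>
     sgn (\<sigma> i) = sgn a \<and> sgn (\<sigma> j) = sgn b \<and> sgn (\<sigma> l) = sgn c)"
  (is "_ \<longleftrightarrow> (\<exists>i j l. ?occ i j l)")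
proof -
  have all3: "(\<forall>k<3. P k) \<longleftrightarrow> P 0 \<and> P 1 \<and> P 2" for P :: "nat \<Rightarrow> bool"
    by (auto simp: less_Suc_eq eval_nat_numeral)
  have mono3: "strict_mono_on {..<3} f \<longleftrightarrow> f 0 < f 1 \<and> f 1 < f 2" for f :: "nat \<Rightarrow> nat"
    unfolding strict_mono_on_def by (auto simp: less_Suc_eq eval_nat_numeral)
  have image3: "f ` {..<3} \<subseteq> {1..n} \<longleftrightarrow> (\<forall>k<3. f k \<in> {1..n})" for f :: "nat \<Rightarrow> nat"
    by auto
  have len: "length [a, b, c] = 3" by simp
  have "contains_pattern n \<sigma> [a, b, c] \<longleftrightarrow> (\<exists>f :: nat \<Rightarrow> nat. ?occ (f 0) (f 1) (f 2))"
    unfolding contains_pattern_def len all3 mono3 image3 by (intro ex_cong1 iffI; simp)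
  also have "\<dots> \<longleftrightarrow> (\<exists>i j l. ?occ i j l)"
  proof
    assume "\<exists>i j l. ?occ i j l"
    then obtain i j l where "?occ i j l" by blast
    then have "?occ ([i, j, l] ! 0) ([i, j, l] ! 1) ([i, j, l] ! 2)" by simp
    then show "\<exists>f :: nat \<Rightarrow> nat. ?occ (f 0) (f 1) (f 2)" by blast
  qed blast
  finally show ?thesis .
qed

lemma contains_pattern_2:
  "contains_pattern n \<sigma> [a, b] \<longleftrightarrow> (\<exists>j l. 1 \<le> j \<and> j < l \<and> l \<le> n \<and>
     (\<bar>\<sigma> j\<bar> < \<bar>\<sigma> l\<bar> \<longleftrightarrow> \<bar>a\<bar> < \<bar>b\<bar>) \<and> (\<bar>\<sigma> l\<bar> < \<bar>\<sigma> j\<bar> \<longleftrightarrow> \<bar>b\<bar> < \<bar>a\<bar>) \<and>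
     sgn (\<sigma> j) = sgn a \<and> sgn (\<sigma> l) = sgn b)"
  (is "_ \<longleftrightarrow> (\<exists>j l. ?occ j l)")
proof -
  have all2: "(\<forall>k<2. P k) \<longleftrightarrow> P 0 \<and> P 1" for P :: "nat \<Rightarrow> bool"
    by (auto simp: less_Suc_eq eval_nat_numeral)
  have mono2: "strict_mono_on {..<2} f \<longleftrightarrow> f 0 < f 1" for f :: "nat \<Rightarrow> nat"
    unfolding strict_mono_on_def by (auto simp: less_Suc_eq eval_nat_numeral)
  have image2: "f ` {..<2} \<subseteq> {1..n} \<longleftrightarrow> (\<forall>k<2. f k \<in> {1..n})" for f :: "nat \<Rightarrow> nat"
    by auto
  have len: "length [a, b] = 2" by simp
  have "contains_pattern n \<sigma> [a, b] \<longleftrightarrow> (\<exists>f :: nat \<Rightarrow> nat. ?occ (f 0) (f 1))"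
    unfolding contains_pattern_def len all2 mono2 image2 by (intro ex_cong1 iffI; simp)
  also have "\<dots> \<longleftrightarrow> (\<exists>j l. ?occ j l)"
  proof
    assume "\<exists>j l. ?occ j l"
    then obtain j l where "?occ j l" by blast
    then have "?occ ([j, l] ! 0) ([j, l] ! 1)" by simp
    then show "\<exists>f :: nat \<Rightarrow> nat. ?occ (f 0) (f 1)" by blast
  qed blast
  finally show ?thesis .
qed

definition forbidden_patterns :: "int list set" where
  "forbidden_patterns = {[3, 2, 1], [-3, 2, 1], [3, 2, -1], [-3, 2, -1], [1, -2], [-1, -2]}"

lemma contains_forbidden_imp_occurs321:
  assumes "\<exists>\<tau>\<in>forbidden_patterns. contains_pattern n \<sigma> \<tau>"
  shows "occurs321 \<sigma> n \<or> occurs321_across n \<sigma>"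
proof -
  have "occurs321 \<sigma> n" if "contains_pattern n \<sigma> [3, 2, 1] \<or> contains_pattern n \<sigma> [3, 2, -1]"
    using that unfolding contains_pattern_3 occurs321_def
    by (elim disjE exE) (auto simp: sgn_1_pos sgn_1_neg abs_if intro!: exI)
  moreover have "occurs321_across n \<sigma>"
    if "contains_pattern n \<sigma> [-3, 2, 1] \<or> contains_pattern n \<sigma> [-3, 2, -1]"
  proof -
    have "\<exists>i j l. 1 \<le> i \<and> i < j \<and> j < l \<and> l \<le> n \<and> - \<sigma> i > \<sigma> j \<and> \<sigma> j > \<sigma> l"
      using that unfolding contains_pattern_3
      by (elim disjE exE) (auto simp: sgn_1_pos sgn_1_neg abs_if intro!: exI)
    then obtain i j l where "1 \<le> i" "i < j" "j < l" "l \<le> n" "- \<sigma> i > \<sigma> j" "\<sigma> j > \<sigma> l"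
      by blast
    then show ?thesis
      unfolding occurs321_across_def by (intro exI[of _ i] exI[of _ j] exI[of _ l]) auto
  qed
  moreover have "occurs321_across n \<sigma>"
    if "contains_pattern n \<sigma> [1, -2] \<or> contains_pattern n \<sigma> [-1, -2]"
  proof -
    have "\<exists>j l. 1 \<le> j \<and> j < l \<and> l \<le> n \<and> - \<sigma> l > \<sigma> j \<and> \<sigma> j > \<sigma> l"
      using that unfolding contains_pattern_2
      by (elim disjE exE) (auto simp: sgn_1_pos sgn_1_neg abs_if intro!: exI)
    then obtain j l where "1 \<le> j" "j < l" "l \<le> n" "- \<sigma> l > \<sigma> j" "\<sigma> j > \<sigma> l"
      by blast
    then show ?thesis
      unfolding occurs321_across_def by (intro exI[of _ l] exI[of _ j] exI[of _ l]) auto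
  qed
  ultimately show ?thesis
    using assms unfolding forbidden_patterns_def by blast
qed

lemma abs_less_if_avoids_1_2bar:
  assumes \<sigma>: "\<sigma> \<in> signed_perms n"
    and avoid: "\<not> contains_pattern n \<sigma> [1, -2]" "\<not> contains_pattern n \<sigma> [-1, -2]"
    and jl: "1 \<le> j" "j < l" "l \<le> n" and neg: "\<sigma> l < 0"
  shows "\<bar>\<sigma> l\<bar> < \<bar>\<sigma> j\<bar>"
proof (rule ccontr)
  assume "\<not> ?thesis"
  moreover have "\<bar>\<sigma> j\<bar> \<noteq> \<bar>\<sigma> l\<bar>"
    using \<sigma> jl unfolding signed_perms_iff by (auto dest: inj_onD)
  ultimately have less: "\<bar>\<sigma> j\<bar> < \<bar>\<sigma> l\<bar>" by linarith
  have "\<sigma> j \<noteq> 0" using \<sigma> jl unfolding signed_perms_iff by auto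
  then consider "\<sigma> j > 0" | "\<sigma> j < 0" by linarith
  then show False
  proof cases
    case 1
    then have "contains_pattern n \<sigma> [1, -2]"
      unfolding contains_pattern_2 using jl neg less
      by (intro exI[of _ j] exI[of _ l]) (auto simp: sgn_1_pos sgn_1_neg)
    with avoid show False by blast
  next
    case 2
    then have "contains_pattern n \<sigma> [-1, -2]"
      unfolding contains_pattern_2 using jl neg less
      by (intro exI[of _ j] exI[of _ l]) (auto simp: sgn_1_pos sgn_1_neg)
    with avoid show False by blast
  qed
qed

lemma pos_if_descent_avoids_1_2bar:
  assumes \<sigma>: "\<sigma> \<in> signed_perms n"
    and avoid: "\<not> contains_pattern n \<sigma> [1, -2]" "\<not> contains_pattern n \<sigma> [-1, -2]"
    and jl: "1 \<le> j" "j < l" "l \<le> n" and desc: "\<sigma> j > \<sigma> l"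
  shows "\<sigma> j > 0"
  using abs_less_if_avoids_1_2bar[OF \<sigma> avoid jl] desc by fastforce

lemma occurs321_imp_contains_321:
  assumes \<sigma>: "\<sigma> \<in> signed_perms n"
    and avoid: "\<not> contains_pattern n \<sigma> [1, -2]" "\<not> contains_pattern n \<sigma> [-1, -2]"
    and "occurs321 \<sigma> n"
  shows "contains_pattern n \<sigma> [3, 2, 1] \<or> contains_pattern n \<sigma> [3, 2, -1]"
proof -
  obtain i j l where ijl: "1 \<le> i" "i < j" "j < l" "l \<le> n" "\<sigma> i > \<sigma> j" "\<sigma> j > \<sigma> l"
    using \<open>occurs321 \<sigma> n\<close> unfolding occurs321_def by blast
  have "\<sigma> j > 0" using pos_if_descent_avoids_1_2bar[OF \<sigma> avoid] ijl by simp
  have "\<sigma> l \<noteq> 0" using \<sigma> ijl unfolding signed_perms_iff by simp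
  then consider "\<sigma> l > 0" | "\<sigma> l < 0" by linarith
  then show ?thesis
  proof cases
    case 1
    then have "contains_pattern n \<sigma> [3, 2, 1]"
      unfolding contains_pattern_3 using ijl
      by (intro exI[of _ i] exI[of _ j] exI[of _ l]) (auto simp: sgn_1_pos)
    then show ?thesis ..
  next
    case 2
    then have "contains_pattern n \<sigma> [3, 2, -1]"
      unfolding contains_pattern_3 using ijl \<open>\<sigma> j > 0\<close> abs_less_if_avoids_1_2bar[OF \<sigma> avoid, of j l]
      by (intro exI[of _ i] exI[of _ j] exI[of _ l]) (auto simp: sgn_1_pos sgn_1_neg)
    then show ?thesis ..
  qed
qed

lemma occurs321_across_imp_contains_3bar21:
  assumes \<sigma>: "\<sigma> \<in> signed_perms n"
    and avoid: "\<not> contains_pattern n \<sigma> [1, -2]" "\<not> contains_pattern n \<sigma> [-1, -2]"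
    and "occurs321_across n \<sigma>"
  shows "contains_pattern n \<sigma> [-3, 2, 1] \<or> contains_pattern n \<sigma> [-3, 2, -1]"
proof -
  obtain i j l where ijl: "i \<in> {1..n}" "1 \<le> j" "j < l" "l \<le> n" "- \<sigma> i > \<sigma> j" "\<sigma> j > \<sigma> l"
    using \<open>occurs321_across n \<sigma>\<close> unfolding occurs321_across_def by blast
  have "\<sigma> j > 0" using pos_if_descent_avoids_1_2bar[OF \<sigma> avoid] ijl by simp
  have "i < j"
  proof (rule ccontr)
    assume "\<not> i < j"
    moreover have "i \<noteq> j" using ijl \<open>\<sigma> j > 0\<close> by auto
    ultimately have "j < i" by linarith
    with abs_less_if_avoids_1_2bar[OF \<sigma> avoid, of j i] ijl \<open>\<sigma> j > 0\<close> show False by auto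
  qed
  have "\<sigma> l \<noteq> 0" using \<sigma> ijl unfolding signed_perms_iff by simp
  then consider "\<sigma> l > 0" | "\<sigma> l < 0" by linarith
  then show ?thesis
  proof cases
    case 1
    then have "contains_pattern n \<sigma> [-3, 2, 1]"
      unfolding contains_pattern_3 using ijl \<open>i < j\<close> \<open>\<sigma> j > 0\<close>
      by (intro exI[of _ i] exI[of _ j] exI[of _ l]) (auto simp: sgn_1_pos sgn_1_neg)
    then show ?thesis ..
  next
    case 2
    then have "contains_pattern n \<sigma> [-3, 2, -1]"
      unfolding contains_pattern_3
      using ijl \<open>i < j\<close> \<open>\<sigma> j > 0\<close> abs_less_if_avoids_1_2bar[OF \<sigma> avoid, of j l]
      by (intro exI[of _ i] exI[of _ j] exI[of _ l]) (auto simp: sgn_1_pos sgn_1_neg)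
    then show ?thesis ..
  qed
qed

lemma occurs321_imp_contains_forbidden:
  assumes \<sigma>: "\<sigma> \<in> signed_perms n" and occ: "occurs321 \<sigma> n \<or> occurs321_across n \<sigma>"
  shows "\<exists>\<tau>\<in>forbidden_patterns. contains_pattern n \<sigma> \<tau>"
proof (cases "contains_pattern n \<sigma> [1, -2] \<or> contains_pattern n \<sigma> [-1, -2]")
  case True
  then show ?thesis by (auto simp: forbidden_patterns_def)
next
  case False
  then show ?thesis
    using occ occurs321_imp_contains_321[OF \<sigma>] occurs321_across_imp_contains_3bar21[OF \<sigma>]
    by (auto simp: forbidden_patterns_def)
qed

lemma avoids_forbidden_patterns_iff:
  assumes "\<sigma> \<in> signed_perms n"
  shows "(\<forall>\<tau>\<in>forbidden_patterns. avoids_pattern n \<sigma> \<tau>) \<longleftrightarrow> \<not> occurs321 (unfold_signed n \<sigma>) (2*n)"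
  using contains_forbidden_imp_occurs321 occurs321_imp_contains_forbidden[OF assms]
  unfolding avoids_pattern_def occurs321_unfold_signed_iff by blast

theorem mainTheorem11:
  fixes n :: nat
  assumes "n \<ge> 1"
  shows "Theta n ` SC321 n =
    {\<sigma> \<in> signed_perms n.
       avoids_pattern n \<sigma> [3, 2, 1] \<and> avoids_pattern n \<sigma> [-3, 2, 1] \<and>
       avoids_pattern n \<sigma> [3, 2, -1] \<and> avoids_pattern n \<sigma> [-3, 2, -1] \<and>
       avoids_pattern n \<sigma> [1, -2] \<and> avoids_pattern n \<sigma> [-1, -2]}"
proof -
  have "Theta n ` SC321 n = {\<sigma> \<in> signed_perms n. \<not> occurs321 (unfold_signed n \<sigma>) (2*n)}"
    by (rule Theta_image_SC321)
  also have "\<dots> = {\<sigma> \<in> signed_perms n. \<forall>\<tau>\<in>forbidden_patterns. avoids_pattern n \<sigma> \<tau>}"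
    using avoids_forbidden_patterns_iff by blast
  finally show ?thesis by (simp add: forbidden_patterns_def)
qed

end
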